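(* Let $T:\mathbb{R}^n\to\mathbb{R}^n$ be an averaged operator with $\mathrm{Fix}(T)\neq\emptyset$ such that $\mathrm{Id}-T$ is coercive, i.e. $\lim_{\|x\|\to\infty}\|x-T(x)\|=\infty$. Let $\{x^k\}$ be a sequence generated by the Safe-L2O method (described in the context) with fallback operator $T$, any sequence of L2O maps $\{\mathcal{L}_k\}$, any $\alpha\in[0,1)$, and a safeguard sequence $\{\mu_k\}$ satisfying the following condition: if the inequality $\|y^k-T(y^k)\|\le\alpha\mu_k$ holds for infinitely many $k$, then $\mu_k\to 0$. Then $$\lim_{k\to\infty} d_{\mathrm{Fix}(T)}(x^k)=0 .$$ Moreover, if $\{x^k\}$ has exactly one cluster point, then $\{x^k\}$ converges to a point $x^\star\in\mathrm{Fix}(T)$.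
   Context: $\|\cdot\|$ is the Euclidean norm on $\mathbb{R}^n$. $\mathrm{Fix}(T):=\{x\in\mathbb{R}^n: T(x)=x\}$ and $d_C(x):=\inf\{\|x-y\|:y\in C\}$. An operator $Q:\mathbb{R}^n\to\mathbb{R}^n$ is nonexpansive if $\|Qx-Qy\|\le\|x-y\|$ for all $x,y$; an operator $T$ is averaged if $T=(1-\lambda)\mathrm{Id}+\lambda Q$ for some $\lambda\in(0,1)$ and some nonexpansive $Q$. Safe-L2O method: fix maps $\mathcal{L}_k:\mathbb{R}^n\to\mathbb{R}^n$ ($k\in\mathbb{N}$; e.g. $\mathcal{L}_k=\mathcal{L}_{\mathrm{L2O}}(\cdot;\zeta^k)$ for a parameterized family and arbitrary parameters $\zeta^k$), an averaged fallback operator $T$, $\alpha\in[0,1)$, and an initial point $x^1\in\mathbb{R}^n$. Set $\mu_1:=\|x^1-T(x^1)\|$. For $k=1,2,\dots$: compute $y^k:=\mathcal{L}_k(x^k)$; if $\|y^k-T(y^k)\|\le\alpha\mu_k$, set $x^{k+1}:=y^k$, otherwise set $x^{k+1}:=T(x^k)$; then compute a new nonnegative value $\mu_{k+1}$ by some safeguard update rule (which may depend on the iterates generated so far). *)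

theory Defs
  imports "HOL-Analysis.Analysis"
begin

definition nonexpansive :: "('a::real_normed_vector \<Rightarrow> 'a) \<Rightarrow> bool" where
  "nonexpansive Q \<longleftrightarrow> (\<forall>x y. norm (Q x - Q y) \<le> norm (x - y))"

definition averaged :: "('a::real_normed_vector \<Rightarrow> 'a) \<Rightarrow> bool" where
  "averaged T \<longleftrightarrow> (\<exists>lam Q. 0 < lam \<and> lam < 1 \<and> nonexpansive Q \<and>
      (\<forall>x. T x = (1 - lam) *\<^sub>R x + lam *\<^sub>R Q x))"

definition Fix :: "('a \<Rightarrow> 'a) \<Rightarrow> 'a set" where
  "Fix T = {x. T x = x}"

text \<open>p is a cluster point of the sequence x (indices k \<ge> 1; the value x 0 is irrelevant):
  some subsequence converges to p.\<close>
definition cluster_point :: "(nat \<Rightarrow> 'a::topological_space) \<Rightarrow> 'a \<Rightarrow> bool" where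
  "cluster_point x p \<longleftrightarrow> (\<exists>r. strict_mono r \<and> (x \<circ> r) \<longlonglongrightarrow> p)"

text \<open>The Safe-L2O iteration (indices start at 1): x, mu generated from L, T, alpha, with an
  arbitrary nonnegative safeguard update.\<close>
definition safe_l2o :: "(nat \<Rightarrow> 'a \<Rightarrow> 'a) \<Rightarrow> ('a::real_normed_vector \<Rightarrow> 'a) \<Rightarrow> real
    \<Rightarrow> (nat \<Rightarrow> 'a) \<Rightarrow> (nat \<Rightarrow> real) \<Rightarrow> bool" where
  "safe_l2o L T \<alpha> x \<mu> \<longleftrightarrow>
     \<mu> 1 = norm (x 1 - T (x 1)) \<and>
     (\<forall>k\<ge>1. 0 \<le> \<mu> k) \<and>
     (\<forall>k\<ge>1. x (Suc k) = (if norm (L k (x k) - T (L k (x k))) \<le> \<alpha> * \<mu> k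
                             then L k (x k) else T (x k)))"

end

theory Submission imports Defs begin

text \<open>If learned steps are accepted infinitely often, the safeguard forces \<open>\<mu>\<^sub>k \<rightarrow> 0\<close>; accepted
  steps then have residual at most \<open>\<alpha> \<mu>\<^sub>k\<close> and fallback steps never increase it, since \<open>T\<close> is
  nonexpansive. Otherwise the method is eventually the plain iteration of \<open>T\<close>, whose residual
  vanishes by Fej\'er monotonicity. Either way \<open>x\<^sub>k - T x\<^sub>k \<rightarrow> 0\<close>, so by coercivity the iterates
  stay bounded, and compactness turns the vanishing residual into vanishing distance to the zero
  set \<open>Fix T\<close> of \<open>Id - T\<close>. A bounded sequence with a single cluster point converges, and its
  limit is a fixed point by continuity.\<close>

lemma norm_convex_combination_squared:
  fixes a b :: "'a::real_inner"
  shows "(norm ((1 - l) *\<^sub>R a + l *\<^sub>R b))\<^sup>2 =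
     (1 - l) * (norm a)\<^sup>2 + l * (norm b)\<^sup>2 - l * (1 - l) * (norm (a - b))\<^sup>2"
  unfolding power2_norm_eq_inner by (simp add: inner_simps algebra_simps inner_commute)

lemma averaged_imp_nonexpansive:
  fixes T :: "'a::real_normed_vector \<Rightarrow> 'a"
  assumes "averaged T"
  shows "nonexpansive T"
  unfolding nonexpansive_def
proof (intro allI)
  fix x y
  obtain l Q where l: "0 < l" "l < 1" and Q: "nonexpansive Q"
    and TQ: "\<And>x. T x = (1 - l) *\<^sub>R x + l *\<^sub>R Q x"
    using assms unfolding averaged_def by blast
  have "T x - T y = (1 - l) *\<^sub>R (x - y) + l *\<^sub>R (Q x - Q y)"
    by (simp add: TQ algebra_simps)
  also have "norm \<dots> \<le> (1 - l) * norm (x - y) + l * norm (Q x - Q y)"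
    using l by (metis abs_of_nonneg less_eq_real_def norm_scaleR norm_triangle_ineq diff_ge_0_iff_ge)
  also have "\<dots> \<le> (1 - l) * norm (x - y) + l * norm (x - y)"
    using Q l unfolding nonexpansive_def by (simp add: mult_left_mono)
  finally show "norm (T x - T y) \<le> norm (x - y)" by (simp add: algebra_simps)
qed

lemma nonexpansive_imp_continuous_on:
  assumes "nonexpansive T"
  shows "continuous_on S T"
proof (rule lipschitz_on_continuous_on)
  show "1-lipschitz_on S T"
    using assms by (intro lipschitz_onI) (simp_all add: nonexpansive_def dist_norm)
qed

lemma nonexpansive_residual_decreasing:
  assumes "nonexpansive T"
  shows "norm (T y - T (T y)) \<le> norm (y - T y)"
  using assms unfolding nonexpansive_def by (metis norm_minus_commute)

text \<open>For \<open>T = (1 - \<lambda>) Id + \<lambda> Q\<close> the constant is \<open>c = (1 - \<lambda>) / \<lambda>\<close>.\<close>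
lemma averaged_strongly_quasi_nonexpansive:
  fixes T :: "'a::real_inner \<Rightarrow> 'a"
  assumes "averaged T"
  obtains c where "c > 0"
    and "\<And>x z. z \<in> Fix T \<Longrightarrow> (norm (T x - z))\<^sup>2 \<le> (norm (x - z))\<^sup>2 - c * (norm (x - T x))\<^sup>2"
proof -
  obtain l Q where l: "0 < l" "l < 1" and Q: "nonexpansive Q"
    and TQ: "\<And>x. T x = (1 - l) *\<^sub>R x + l *\<^sub>R Q x"
    using assms unfolding averaged_def by blast
  have "(norm (T x - z))\<^sup>2 \<le> (norm (x - z))\<^sup>2 - ((1 - l) / l) * (norm (x - T x))\<^sup>2"
    if "z \<in> Fix T" for x z
  proof -
    have "l *\<^sub>R (Q z - z) = 0" using that TQ[of z] by (simp add: Fix_def algebra_simps)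
    then have "Q z = z" using l by simp
    then have "(norm (Q x - z))\<^sup>2 \<le> (norm (x - z))\<^sup>2"
      using Q unfolding nonexpansive_def by (metis norm_ge_zero power_mono)
    then have Qx: "l * (norm (Q x - z))\<^sup>2 \<le> l * (norm (x - z))\<^sup>2"
      using l by (simp add: mult_left_mono)
    have "x - T x = l *\<^sub>R ((x - z) - (Q x - z))" by (simp add: TQ algebra_simps)
    then have "((1 - l) / l) * (norm (x - T x))\<^sup>2 = l * (1 - l) * (norm ((x - z) - (Q x - z)))\<^sup>2"
      using l by (simp add: power2_eq_square)
    moreover have "T x - z = (1 - l) *\<^sub>R (x - z) + l *\<^sub>R (Q x - z)"
      by (simp add: TQ algebra_simps)
    then have "(norm (T x - z))\<^sup>2 = (1 - l) * (norm (x - z))\<^sup>2 + l * (norm (Q x - z))\<^sup>2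
        - l * (1 - l) * (norm ((x - z) - (Q x - z)))\<^sup>2"
      by (simp only: norm_convex_combination_squared)
    ultimately show ?thesis using Qx by (simp add: algebra_simps)
  qed
  then show ?thesis using that[of "(1 - l) / l"] l by simp
qed

text \<open>Fej\'er monotonicity: the squared distances to a fixed point decrease, and the decrements
  dominate the squared residuals, so these tend to zero.\<close>
lemma averaged_iteration_residual_tendsto_zero:
  fixes T :: "'a::real_inner \<Rightarrow> 'a"
  assumes "averaged T" and "Fix T \<noteq> {}" and step: "\<And>j. x (Suc j) = T (x j)"
  shows "(\<lambda>j. norm (x j - T (x j))) \<longlonglongrightarrow> 0"
proof -
  obtain c where c: "c > 0"
    and sqne: "\<And>x z. z \<in> Fix T \<Longrightarrow> (norm (T x - z))\<^sup>2 \<le> (norm (x - z))\<^sup>2 - c * (norm (x - T x))\<^sup>2"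
    using averaged_strongly_quasi_nonexpansive[OF assms(1)] by blast
  obtain z where z: "z \<in> Fix T" using assms(2) by blast
  define d where "d j = (norm (x j - z))\<^sup>2" for j
  have gain: "c * (norm (x j - T (x j)))\<^sup>2 \<le> d j - d (Suc j)" for j
    using sqne[OF z, of "x j"] step[of j] unfolding d_def by simp
  have "decseq d"
  proof (rule decseq_SucI)
    show "d (Suc j) \<le> d j" for j using gain[of j] c by (smt (verit) zero_le_mult_iff zero_le_power2)
  qed
  then obtain D where "d \<longlonglongrightarrow> D"
    using decseq_convergent[of d 0] unfolding d_def by auto
  then have "(\<lambda>j. d j - d (Suc j)) \<longlonglongrightarrow> 0"
    using tendsto_diff[OF _ LIMSEQ_Suc] by fastforce
  then have "(\<lambda>j. c * (norm (x j - T (x j)))\<^sup>2) \<longlonglongrightarrow> 0"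
    by (rule tendsto_sandwich[rotated 2, OF tendsto_const])
       (use gain c in auto)
  then show ?thesis using c by simp
qed

lemma safe_l2o_eventually_fallback:
  assumes "safe_l2o L T \<alpha> x \<mu>"
    and "finite {k. 1 \<le> k \<and> norm (L k (x k) - T (L k (x k))) \<le> \<alpha> * \<mu> k}"
  obtains M where "\<And>k. k \<ge> M \<Longrightarrow> x (Suc k) = T (x k)"
proof -
  obtain N where "\<And>k. 1 \<le> k \<Longrightarrow> norm (L k (x k) - T (L k (x k))) \<le> \<alpha> * \<mu> k \<Longrightarrow> k \<le> N"
    using assms(2) unfolding finite_nat_set_iff_bounded_le by blast
  then have "1 \<le> k \<and> \<not> norm (L k (x k) - T (L k (x k))) \<le> \<alpha> * \<mu> k" if "k \<ge> Suc N" for k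
    using that by (metis Suc_le_eq le_add1 not_less_eq_eq plus_1_eq_Suc order_trans)
  then have "x (Suc k) = T (x k)" if "k \<ge> Suc N" for k
    using assms(1) that unfolding safe_l2o_def by auto
  then show ?thesis using that by blast
qed

lemma safe_l2o_residual_tendsto_zero_if_infinitely_safe:
  assumes T: "nonexpansive T" and alpha: "\<alpha> \<le> 1" and iter: "safe_l2o L T \<alpha> x \<mu>"
    and mu: "\<mu> \<longlonglongrightarrow> 0"
    and safe: "infinite {k. 1 \<le> k \<and> norm (L k (x k) - T (L k (x k))) \<le> \<alpha> * \<mu> k}"
  shows "(\<lambda>k. norm (x k - T (x k))) \<longlonglongrightarrow> 0"
  unfolding LIMSEQ_iff
proof (intro allI impI)
  fix e :: real assume "0 < e"
  then obtain N where N: "\<And>k. k \<ge> N \<Longrightarrow> \<bar>\<mu> k\<bar> < e" using mu unfolding LIMSEQ_iff by auto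
  have bound: "\<alpha> * \<mu> k < e" if "k \<ge> N" "k \<ge> 1" for k
  proof -
    have "0 \<le> \<mu> k" using iter that(2) unfolding safe_l2o_def by blast
    then have "\<alpha> * \<mu> k \<le> \<mu> k" using alpha mult_right_mono[of \<alpha> 1 "\<mu> k"] by simp
    then show ?thesis using N[OF that(1)] by simp
  qed
  have step: "x (Suc k) = (if norm (L k (x k) - T (L k (x k))) \<le> \<alpha> * \<mu> k
                           then L k (x k) else T (x k))" if "k \<ge> 1" for k
    using iter that unfolding safe_l2o_def by blast
  obtain K where K: "K \<ge> max N 1" "norm (L K (x K) - T (L K (x K))) \<le> \<alpha> * \<mu> K"
    using safe unfolding infinite_nat_iff_unbounded_le by blast
  have "norm (x (Suc K + n) - T (x (Suc K + n))) < e" for n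
  proof (induction n)
    case 0
    show ?case using K step[of K] bound[of K] by simp
  next
    case (Suc n)
    let ?k = "Suc K + n"
    show ?case
    proof (cases "norm (L ?k (x ?k) - T (L ?k (x ?k))) \<le> \<alpha> * \<mu> ?k")
      case True
      then show ?thesis using K step[of ?k] bound[of ?k] by simp
    next
      case False
      then show ?thesis
        using K step[of ?k] Suc.IH nonexpansive_residual_decreasing[OF T, of "x ?k"] by simp
    qed
  qed
  then have "\<forall>k\<ge>Suc K. norm (norm (x k - T (x k)) - 0) < e"
    by (metis le_Suc_ex norm_ge_zero real_norm_def abs_of_nonneg diff_zero)
  then show "\<exists>no. \<forall>k\<ge>no. norm (norm (x k - T (x k)) - 0) < e" by blast
qed

lemma safe_l2o_residual_tendsto_zero:
  fixes T :: "'a::real_inner \<Rightarrow> 'a"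
  assumes "averaged T" and "Fix T \<noteq> {}" and "\<alpha> \<le> 1" and iter: "safe_l2o L T \<alpha> x \<mu>"
    and safeguard: "infinite {k. 1 \<le> k \<and> norm (L k (x k) - T (L k (x k))) \<le> \<alpha> * \<mu> k}
                    \<Longrightarrow> \<mu> \<longlonglongrightarrow> 0"
  shows "(\<lambda>k. norm (x k - T (x k))) \<longlonglongrightarrow> 0"
proof (cases "finite {k. 1 \<le> k \<and> norm (L k (x k) - T (L k (x k))) \<le> \<alpha> * \<mu> k}")
  case True
  then obtain M where "\<And>k. k \<ge> M \<Longrightarrow> x (Suc k) = T (x k)"
    using safe_l2o_eventually_fallback[OF iter] by blast
  then have "(\<lambda>j. norm (x (j + M) - T (x (j + M)))) \<longlonglongrightarrow> 0"
    using averaged_iteration_residual_tendsto_zero[OF assms(1,2), of "\<lambda>j. x (j + M)"] by simp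
  then show ?thesis by (rule LIMSEQ_offset)
next
  case False
  then show ?thesis
    using safe_l2o_residual_tendsto_zero_if_infinitely_safe averaged_imp_nonexpansive assms by blast
qed

lemma coercive_imp_bounded_range:
  fixes f :: "'a::real_normed_vector \<Rightarrow> real"
  assumes "filterlim f at_top at_infinity" and "(\<lambda>k. f (x k)) \<longlonglongrightarrow> 0"
  shows "bounded (range x)"
proof -
  obtain b where b: "\<And>z. norm z \<ge> b \<Longrightarrow> f z \<ge> 1"
    using assms(1) unfolding filterlim_at_top eventually_at_infinity by blast
  have "eventually (\<lambda>k. f (x k) < 1) sequentially"
    using assms(2) by (rule order_tendstoD) simp
  then have "eventually (\<lambda>k. norm (x k) \<le> norm b) sequentially"
    by eventually_elim (smt (verit) b real_norm_def)
  then have "Bseq x" by (rule Bseq_eventually_mono) simp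
  then show ?thesis by (simp add: Bseq_eq_bounded)
qed

text \<open>On a compact ball, points at distance \<open>\<ge> e\<close> from the zero set of \<open>f\<close> have \<open>norm (f y)\<close>
  bounded away from zero.\<close>
lemma infdist_zero_set_tendsto_zero:
  fixes f :: "'a::{heine_borel, real_normed_vector} \<Rightarrow> 'b::real_normed_vector"
  assumes f: "continuous_on UNIV f" and bdd: "bounded (range x)"
    and lim: "(\<lambda>k. f (x k)) \<longlonglongrightarrow> 0"
  shows "(\<lambda>k. infdist (x k) {y. f y = 0}) \<longlonglongrightarrow> 0"
  unfolding LIMSEQ_iff
proof (intro allI impI)
  fix e :: real assume e: "0 < e"
  obtain B where "\<And>k. norm (x k) \<le> B" using bdd unfolding bounded_iff by blast
  then have B: "\<And>k. x k \<in> cball 0 B" by simp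
  define S where "S = cball 0 B \<inter> {y. e \<le> infdist y {y. f y = 0}}"
  obtain \<delta> where \<delta>: "\<delta> > 0" "\<And>y. y \<in> S \<Longrightarrow> \<delta> \<le> norm (f y)"
  proof (cases "S = {}")
    case True
    then show ?thesis using that[of 1] by simp
  next
    case False
    have "compact S" unfolding S_def
      by (intro compact_Int_closed compact_cball closed_Collect_le continuous_intros)
    moreover have "continuous_on S (\<lambda>y. norm (f y))"
      using f by (intro continuous_intros) (auto intro: continuous_on_subset)
    ultimately obtain y0 where y0: "y0 \<in> S" "\<And>y. y \<in> S \<Longrightarrow> norm (f y0) \<le> norm (f y)"
      using continuous_attains_inf[OF _ False] by blast
    have "y0 \<notin> {y. f y = 0}"
      using y0(1) e unfolding S_def by (metis IntD2 infdist_zero mem_Collect_eq not_le)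
    then show ?thesis using that[of "norm (f y0)"] y0 by simp
  qed
  obtain N where "\<And>k. k \<ge> N \<Longrightarrow> norm (f (x k)) < \<delta>"
    using lim \<delta>(1) unfolding LIMSEQ_iff by auto
  then have "x k \<notin> S" if "k \<ge> N" for k
    using \<delta>(2) that by (meson not_le)
  then have "infdist (x k) {y. f y = 0} < e" if "k \<ge> N" for k
    using B that unfolding S_def by (meson IntI mem_Collect_eq not_le)
  then show "\<exists>N. \<forall>k\<ge>N. norm (infdist (x k) {y. f y = 0} - 0) < e"
    by (auto simp: infdist_nonneg)
qed

lemma bounded_unique_cluster_point_LIMSEQ:
  fixes x :: "nat \<Rightarrow> 'a::{heine_borel, real_normed_vector}"
  assumes bdd: "bounded (range x)" and "cluster_point x p"
    and unique: "\<And>q. cluster_point x q \<Longrightarrow> q = p"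
  shows "x \<longlonglongrightarrow> p"
proof (rule ccontr)
  assume "\<not> x \<longlonglongrightarrow> p"
  then obtain e where e: "e > 0" "\<forall>N. \<exists>k\<ge>N. e \<le> norm (x k - p)"
    unfolding LIMSEQ_iff by (auto simp: not_less)
  then have "infinite {k. e \<le> norm (x k - p)}"
    unfolding infinite_nat_iff_unbounded_le by auto
  then obtain r :: "nat \<Rightarrow> nat" where r: "strict_mono r" "\<And>n. e \<le> norm (x (r n) - p)"
    using infinite_enumerate by blast
  have "bounded (range (x \<circ> r))" using bdd by (rule bounded_subset) auto
  then obtain q and s :: "nat \<Rightarrow> nat" where s: "strict_mono s" "(x \<circ> r \<circ> s) \<longlonglongrightarrow> q"
    using bounded_imp_convergent_subsequence by blast
  have "cluster_point x q" unfolding cluster_point_def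
    using s strict_mono_o[OF r(1) s(1)] by (auto simp: o_assoc)
  then have "q = p" by (rule unique)
  then have "(\<lambda>n. norm ((x \<circ> r \<circ> s) n - p)) \<longlonglongrightarrow> 0"
    using tendsto_norm[OF tendsto_diff[OF s(2) tendsto_const, of p]] by simp
  moreover have "\<forall>n. e \<le> norm ((x \<circ> r \<circ> s) n - p)" using r by simp
  ultimately show False
    using e(1) LIMSEQ_le_const[of _ 0 e] by fastforce
qed

theorem theorem1:
  fixes T :: "real^'n \<Rightarrow> real^'n"
    and L :: "nat \<Rightarrow> real^'n \<Rightarrow> real^'n"
    and x :: "nat \<Rightarrow> real^'n"
    and \<mu> :: "nat \<Rightarrow> real"
    and \<alpha> :: real
  assumes avg: "averaged T"
    and fix_ne: "Fix T \<noteq> {}"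
    and coercive: "filterlim (\<lambda>z. norm (z - T z)) at_top at_infinity"
    and alpha: "0 \<le> \<alpha>" "\<alpha> < 1"
    and iter: "safe_l2o L T \<alpha> x \<mu>"
    and safeguard: "infinite {k. 1 \<le> k \<and> norm (L k (x k) - T (L k (x k))) \<le> \<alpha> * \<mu> k}
                    \<Longrightarrow> \<mu> \<longlonglongrightarrow> 0"
  shows "(\<lambda>k. infdist (x k) (Fix T)) \<longlonglongrightarrow> 0 \<and>
         ((\<exists>!p. cluster_point x p) \<longrightarrow> (\<exists>xs\<in>Fix T. x \<longlonglongrightarrow> xs))"
proof
  have residual: "(\<lambda>k. x k - T (x k)) \<longlonglongrightarrow> 0"
    using safe_l2o_residual_tendsto_zero[OF avg fix_ne _ iter safeguard] alpha
    by (simp add: tendsto_norm_zero_iff)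
  have "continuous_on UNIV T"
    by (rule nonexpansive_imp_continuous_on[OF averaged_imp_nonexpansive[OF avg]])
  then have cont: "continuous_on UNIV (\<lambda>y. y - T y)"
    by (intro continuous_on_diff continuous_on_id)
  have bdd: "bounded (range x)"
    by (rule coercive_imp_bounded_range[OF coercive])
       (use residual in \<open>simp add: tendsto_norm_zero_iff\<close>)
  have Fix_eq: "Fix T = {y. y - T y = 0}" by (auto simp: Fix_def)
  show "(\<lambda>k. infdist (x k) (Fix T)) \<longlonglongrightarrow> 0"
    unfolding Fix_eq by (rule infdist_zero_set_tendsto_zero[OF cont bdd residual])
  show "(\<exists>!p. cluster_point x p) \<longrightarrow> (\<exists>xs\<in>Fix T. x \<longlonglongrightarrow> xs)"
  proof
    assume "\<exists>!p. cluster_point x p"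
    then obtain p where "cluster_point x p" and "\<And>q. cluster_point x q \<Longrightarrow> q = p"
      by blast
    then have p: "x \<longlonglongrightarrow> p"
      by (rule bounded_unique_cluster_point_LIMSEQ[OF bdd])
    have "(\<lambda>k. x k - T (x k)) \<longlonglongrightarrow> p - T p"
      by (rule continuous_on_tendsto_compose[OF cont p]) simp_all
    then have "p - T p = 0" using residual by (rule LIMSEQ_unique)
    then show "\<exists>xs\<in>Fix T. x \<longlonglongrightarrow> xs" using p Fix_eq by blast
  qed
qed

end
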